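(* Let $\mu>0$ and $\lambda_1>0$, and consider the system $$\frac{dx}{dt}=\lambda_1\bigl(2\mu y-4\mu xy-2x^2-2xy+x\bigr),\qquad \frac{dy}{dt}=\lambda_1\bigl(\mu y-4\mu y^2-2xy-2y^2+y\bigr)$$ on the closed quadrangle $Q\subset\mathbb{R}^2$ defined by $y\ge x/2$, $y\ge 1/2-x$, $y\le 1/3$, $y\le 1/2-x/2$ (with vertices $(1/3,1/6)$, $(1/2,1/4)$, $(1/3,1/3)$, $(1/6,1/3)$). For each value of $\mu$, the system has a unique, globally attracting fixed point $\underline{x}_c(\mu)=(x_c(\mu),y_c(\mu))$ in $Q$. This fixed point lies on the edge $\partial Q_1=Q\cap\{y=x/2\}$. Moreover, the map $\mu\mapsto\underline{x}_c(\mu)$ is one-to-one and onto the interior of the edge $\partial Q_1$, and as $\mu$ grows from $0$ to $\infty$, $\underline{x}_c(\mu)$ changes monotonically between the two endpoints $(1/3,1/6)$ and $(1/2,1/4)$ of this edge.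
   Context: Here $x=V/N^{\star}$ and $y=F/N^{\star}$ are the inverse symbolic coordinates of a crack mosaic ($V$ nodes, $F$ faces, total corner degree $N^{\star}$), $Q$ is the domain of convex mosaics, and the parameter $\mu$ is the ratio of the rate of secondary cracking events to the rate of crack healing events. "Globally attracting in $Q$" means every solution starting in $Q$ converges to it as $t\to\infty$. *)

theory Defs
  imports "HOL-Analysis.Analysis"
begin

definition crack_field :: "real \<Rightarrow> real \<Rightarrow> real \<times> real \<Rightarrow> real \<times> real" where
  "crack_field mu lam1 p = (case p of (x, y) \<Rightarrow>
     (lam1 * (2*mu*y - 4*mu*x*y - 2*x^2 - 2*x*y + x),
      lam1 * (mu*y - 4*mu*y^2 - 2*x*y - 2*y^2 + y)))"

definition quadQ :: "(real \<times> real) set" where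
  "quadQ = {(x, y). y \<ge> x/2 \<and> y \<ge> 1/2 - x \<and> y \<le> 1/3 \<and> y \<le> 1/2 - x/2}"

definition edge1_interior :: "(real \<times> real) set" where
  "edge1_interior = {(x, y). y = x/2 \<and> 1/3 < x \<and> x < 1/2}"

definition is_solution :: "real \<Rightarrow> real \<Rightarrow> (real \<Rightarrow> real \<times> real) \<Rightarrow> bool" where
  "is_solution mu lam1 phi \<longleftrightarrow>
     (\<forall>t\<ge>0. (phi has_vector_derivative crack_field mu lam1 (phi t)) (at t within {0..}))"

end

theory Submission
  imports Defs "HOL-Real_Asymp.Real_Asymp"
begin

text \<open>In the coordinates w = x/y - 2 and z = 1/y the system becomes linear and triangular,
  w' = -\<lambda>\<mu> w and z' = -\<lambda>(\<mu>+1) z + \<lambda>(4\<mu>+6+2w), so it is solved explicitly: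
  w decays to 0 and z tends to (4\<mu>+6)/(\<mu>+1). Along any solution y' is y times a continuous
  function, so y > 0 is preserved, and every solution starting in Q is the explicit one; it tends to
  ((\<mu>+1)/(2\<mu>+3), (\<mu>+1)/(4\<mu>+6)). This is the only zero of the field in Q: there
  dx/dt - 2 dy/dt = \<lambda>(x - 2y)(1 - 2x - 2y - 4\<mu>y), and the second factor is negative on Q.\<close>

lemma has_vector_derivative_fst:
  "(f has_vector_derivative v) F \<Longrightarrow> ((\<lambda>t. fst (f t)) has_real_derivative fst v) F"
  unfolding has_real_derivative_iff_has_vector_derivative has_vector_derivative_def
  by (drule has_derivative_fst) simp

lemma has_vector_derivative_snd:
  "(f has_vector_derivative v) F \<Longrightarrow> ((\<lambda>t. snd (f t)) has_real_derivative snd v) F"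
  unfolding has_real_derivative_iff_has_vector_derivative has_vector_derivative_def
  by (drule has_derivative_snd) simp

lemma tendsto_exp_neg_mult_at_top: "(a::real) > 0 \<Longrightarrow> ((\<lambda>t::real. exp (- a * t)) \<longlongrightarrow> 0) at_top"
  by real_asymp

lemma linear_ode_exp_integral:
  fixes f k :: "real \<Rightarrow> real"
  assumes f': "\<And>t. t \<ge> 0 \<Longrightarrow> (f has_real_derivative k t * f t) (at t within {0..})"
    and k: "continuous_on {0..} k" and t: "t \<ge> 0"
  shows "f t = f 0 * exp (integral {0..t} k)"
proof -
  let ?K = "\<lambda>s. integral {0..s} k"
  have "((\<lambda>s. f s * exp (- ?K s)) has_real_derivative 0) (at s within {0..t})"
    if s: "s \<in> {0..t}" for s
  proof -
    have f's: "(f has_real_derivative k s * f s) (at s within {0..t})"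
      using has_field_derivative_subset[OF f'] s by auto
    have K': "(?K has_real_derivative k s) (at s within {0..t})"
      using integral_has_real_derivative continuous_on_subset[OF k] s by auto
    from DERIV_mult[OF f's DERIV_exp[THEN DERIV_chain2, OF DERIV_minus[OF K']]]
    show ?thesis by (rule DERIV_cong) (simp add: algebra_simps)
  qed
  then obtain C where "\<And>s. s \<in> {0..t} \<Longrightarrow> f s * exp (- ?K s) = C"
    using has_field_derivative_zero_constant[of "{0..t}" "\<lambda>s. f s * exp (- ?K s)"] by auto
  from this[of 0] this[of t] t have "f t * exp (- ?K t) = f 0"
    by simp
  then show ?thesis by (simp add: exp_minus field_simps)
qed

lemma linear_ode_unique:
  fixes f h k g :: "real \<Rightarrow> real"
  assumes f': "\<And>t. t \<ge> 0 \<Longrightarrow> (f has_real_derivative k t * f t + g t) (at t within {0..})"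
    and h': "\<And>t. t \<ge> 0 \<Longrightarrow> (h has_real_derivative k t * h t + g t) (at t within {0..})"
    and k: "continuous_on {0..} k" and init: "f 0 = h 0" and t: "t \<ge> 0"
  shows "f t = h t"
proof -
  have "(\<lambda>s. f s - h s) t = (f 0 - h 0) * exp (integral {0..t} k)"
  proof (rule linear_ode_exp_integral[OF _ k t])
    fix s :: real assume "s \<ge> 0"
    from DERIV_diff[OF f'[OF this] h'[OF this]]
    show "((\<lambda>s. f s - h s) has_real_derivative k s * (f s - h s)) (at s within {0..})"
      by (simp add: algebra_simps)
  qed
  then show ?thesis using init by simp
qed

definition crack_equilibrium :: "real \<Rightarrow> real \<times> real" where
  "crack_equilibrium mu = ((mu + 1) / (2 * mu + 3), (mu + 1) / (4 * mu + 6))"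

lemma crack_equilibrium_eq_2y_y:
  assumes "mu > 0"
  shows "crack_equilibrium mu = (2 * ((mu + 1) / (4 * mu + 6)), (mu + 1) / (4 * mu + 6))"
  using assms unfolding crack_equilibrium_def by (simp add: field_simps)

lemma crack_equilibrium_in_edge1_interior:
  assumes "mu > 0"
  shows "crack_equilibrium mu \<in> edge1_interior"
proof -
  define y where "y = (mu + 1) / (4 * mu + 6)"
  have "1/6 < y" "y < 1/4"
    unfolding y_def using assms by (simp_all add: field_simps)
  then show ?thesis
    unfolding crack_equilibrium_eq_2y_y[OF assms] y_def[symmetric] edge1_interior_def by simp
qed

lemma edge1_interior_subset_quadQ: "edge1_interior \<subseteq> quadQ"
  unfolding edge1_interior_def quadQ_def by auto

lemma quadQ_pos: "p \<in> quadQ \<Longrightarrow> 0 < fst p \<and> 0 < snd p"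
  unfolding quadQ_def by auto

lemma crack_field_on_line:
  "crack_field mu lam (2 * y, y) =
     (2 * lam * y * (mu + 1 - (4 * mu + 6) * y), lam * y * (mu + 1 - (4 * mu + 6) * y))"
  unfolding crack_field_def by (simp add: algebra_simps power2_eq_square)

lemma crack_field_crack_equilibrium:
  assumes "mu > 0"
  shows "crack_field mu lam (crack_equilibrium mu) = (0, 0)"
proof -
  have "mu + 1 - (4 * mu + 6) * ((mu + 1) / (4 * mu + 6)) = 0"
    using assms by (simp add: field_simps)
  then show ?thesis
    unfolding crack_equilibrium_eq_2y_y[OF assms] crack_field_on_line by simp
qed

lemma crack_field_eq_zero_in_quadQ:
  assumes mu: "mu > 0" and lam: "lam > 0" and p: "p \<in> quadQ"
    and zero: "crack_field mu lam p = (0, 0)"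
  shows "p = crack_equilibrium mu"
proof -
  obtain x y where p_eq: "p = (x, y)" by (cases p)
  have Q: "y \<ge> x/2" "y \<ge> 1/2 - x" "y \<le> 1/3" "y \<le> 1/2 - x/2"
    using p unfolding p_eq quadQ_def by auto
  have y_pos: "y > 0" using Q by linarith
  have "fst (crack_field mu lam p) - 2 * snd (crack_field mu lam p)
          = lam * (x - 2*y) * (1 - 2*x - 2*y - 4*mu*y)"
    unfolding p_eq crack_field_def by (simp add: algebra_simps power2_eq_square)
  moreover have "1 - 2*x - 2*y - 4*mu*y < 0"
    using Q mult_pos_pos[OF mu y_pos] by linarith
  ultimately have x_eq: "x = 2*y" using zero lam by simp
  have "lam * y * (mu + 1 - (4 * mu + 6) * y) = 0"
    using zero unfolding p_eq x_eq crack_field_on_line by simp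
  then have "mu + 1 - (4 * mu + 6) * y = 0"
    using y_pos lam by simp
  then have "y = (mu + 1) / (4 * mu + 6)"
    using mu by (simp add: field_simps)
  then show ?thesis
    unfolding p_eq x_eq crack_equilibrium_eq_2y_y[OF mu] by simp
qed

lemma bij_betw_crack_equilibrium: "bij_betw crack_equilibrium {0<..} edge1_interior"
proof (rule bij_betw_imageI)
  show "inj_on crack_equilibrium {0<..}"
    by (rule inj_onI) (auto simp: crack_equilibrium_def field_simps)
  show "crack_equilibrium ` {0<..} = edge1_interior"
  proof
    show "crack_equilibrium ` {0<..} \<subseteq> edge1_interior"
      using crack_equilibrium_in_edge1_interior by auto
    show "edge1_interior \<subseteq> crack_equilibrium ` {0<..}"
    proof
      fix p assume "p \<in> edge1_interior"
      then obtain x where p_eq: "p = (x, x/2)" and x: "1/3 < x" "x < 1/2"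
        unfolding edge1_interior_def by auto
      \<comment> \<open>solve x = (\<mu>+1)/(2\<mu>+3) for \<mu>\<close>
      define mu where "mu = (3*x - 1) / (1 - 2*x)"
      have "mu > 0" "crack_equilibrium mu = p"
        unfolding mu_def p_eq crack_equilibrium_def using x by (simp_all add: field_simps)
      then show "p \<in> crack_equilibrium ` {0<..}" by force
    qed
  qed
qed

lemma strict_mono_on_crack_equilibrium:
  "strict_mono_on {0<..} (\<lambda>mu. fst (crack_equilibrium mu))"
  "strict_mono_on {0<..} (\<lambda>mu. snd (crack_equilibrium mu))"
  unfolding strict_mono_on_def crack_equilibrium_def by (auto simp: field_simps)

lemma crack_equilibrium_tendsto_at_right_0:
  "(crack_equilibrium \<longlongrightarrow> (1/3, 1/6)) (at_right 0)"
proof -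
  have "(crack_equilibrium \<longlongrightarrow> crack_equilibrium 0) (at_right 0)"
    unfolding crack_equilibrium_def by (intro tendsto_intros) auto
  then show ?thesis by (simp add: crack_equilibrium_def)
qed

lemma crack_equilibrium_tendsto_at_top:
  "(crack_equilibrium \<longlongrightarrow> (1/2, 1/4)) at_top"
  unfolding crack_equilibrium_def by (intro tendsto_Pair) real_asymp+

lemma crack_field_ratio_deriv:
  assumes x': "(x has_real_derivative fst (crack_field mu lam (x t, y t))) (at t within S)"
    and y': "(y has_real_derivative snd (crack_field mu lam (x t, y t))) (at t within S)"
    and y: "y t \<noteq> 0"
  shows "((\<lambda>s. x s / y s - 2) has_real_derivative - lam * mu * (x t / y t - 2)) (at t within S)"
  using DERIV_diff[OF DERIV_divide[OF x' y' y] DERIV_const[of 2]]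
  by (rule DERIV_cong) (use y in \<open>simp add: crack_field_def field_simps power2_eq_square\<close>)

lemma crack_field_reciprocal_deriv:
  assumes x': "(x has_real_derivative fst (crack_field mu lam (x t, y t))) (at t within S)"
    and y': "(y has_real_derivative snd (crack_field mu lam (x t, y t))) (at t within S)"
    and y: "y t \<noteq> 0"
  shows "((\<lambda>s. 1 / y s) has_real_derivative
           - lam * (mu + 1) * (1 / y t) + lam * (4 * mu + 6 + 2 * (x t / y t - 2))) (at t within S)"
  using DERIV_divide[OF DERIV_const[of 1] y' y]
  by (rule DERIV_cong) (use y in \<open>simp add: crack_field_def field_simps power2_eq_square\<close>)

lemma linear_coords_crack_field_deriv:
  assumes w': "(w has_real_derivative - lam * mu * w t) (at t within S)"
    and z': "(z has_real_derivative - lam * (mu + 1) * z t + lam * (4 * mu + 6 + 2 * w t)) (at t within S)"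
    and z: "z t \<noteq> 0"
  shows "((\<lambda>s. ((2 + w s) / z s, 1 / z s)) has_vector_derivative
           crack_field mu lam ((2 + w t) / z t, 1 / z t)) (at t within S)"
proof -
  let ?p = "((2 + w t) / z t, 1 / z t)"
  have "((\<lambda>s. (2 + w s) / z s) has_real_derivative fst (crack_field mu lam ?p)) (at t within S)"
    using DERIV_divide[OF DERIV_add[OF DERIV_const[of 2] w'] z' z]
    by (rule DERIV_cong) (use z in \<open>simp add: crack_field_def field_simps power2_eq_square\<close>)
  moreover have "((\<lambda>s. 1 / z s) has_real_derivative snd (crack_field mu lam ?p)) (at t within S)"
    using DERIV_divide[OF DERIV_const[of 1] z' z]
    by (rule DERIV_cong) (use z in \<open>simp add: crack_field_def field_simps power2_eq_square\<close>)
  ultimately show ?thesis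
    using has_vector_derivative_Pair by (fastforce simp: has_real_derivative_iff_has_vector_derivative)
qed

definition crack_w :: "real \<Rightarrow> real \<Rightarrow> real \<Rightarrow> real \<Rightarrow> real" where
  "crack_w mu lam w0 t = w0 * exp (- lam * mu * t)"

text \<open>2 w0 exp(-\<lambda>\<mu>t) is the particular solution for the forcing term 2\<lambda>w of the z-equation.\<close>

definition crack_z :: "real \<Rightarrow> real \<Rightarrow> real \<Rightarrow> real \<Rightarrow> real \<Rightarrow> real" where
  "crack_z mu lam w0 z0 t =
     exp (- lam * (mu + 1) * t) * z0 + (4 * mu + 6) / (mu + 1) * (1 - exp (- lam * (mu + 1) * t))
     + 2 * w0 * (exp (- lam * mu * t) - exp (- lam * (mu + 1) * t))"

definition crack_flow :: "real \<Rightarrow> real \<Rightarrow> real \<times> real \<Rightarrow> real \<Rightarrow> real \<times> real" where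
  "crack_flow mu lam p t =
     (let w0 = fst p / snd p - 2; z0 = 1 / snd p;
          w = crack_w mu lam w0 t; z = crack_z mu lam w0 z0 t
      in ((2 + w) / z, 1 / z))"

lemma crack_w_deriv:
  "(crack_w mu lam w0 has_real_derivative - lam * mu * crack_w mu lam w0 t) (at t within S)"
  unfolding crack_w_def[abs_def] by (auto intro!: derivative_eq_intros)

lemma crack_z_deriv:
  assumes "mu \<noteq> -1"
  shows "(crack_z mu lam w0 z0 has_real_derivative
           - lam * (mu + 1) * crack_z mu lam w0 z0 t + lam * (4 * mu + 6 + 2 * crack_w mu lam w0 t))
           (at t within S)"
proof -
  define q where "q = (4 * mu + 6) / (mu + 1)"
  have q: "4 * mu + 6 = q * (mu + 1)"
    unfolding q_def using assms by (simp add: field_simps)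
  have "crack_z mu lam w0 z0 = (\<lambda>t. exp (- lam * (mu + 1) * t) * z0 + q * (1 - exp (- lam * (mu + 1) * t))
          + 2 * w0 * (exp (- lam * mu * t) - exp (- lam * (mu + 1) * t)))"
    unfolding crack_z_def q_def by auto
  then show ?thesis
    unfolding q crack_w_def by (auto intro!: derivative_eq_intros simp: algebra_simps)
qed

lemma crack_z_pos:
  assumes mu: "mu \<ge> 0" and lam: "lam \<ge> 0" and t: "t \<ge> 0" and z0: "z0 > 0" and w0: "w0 \<ge> -2"
  shows "crack_z mu lam w0 z0 t > 0"
proof -
  define e1 where "e1 = exp (- lam * (mu + 1) * t)"
  define e2 where "e2 = exp (- lam * mu * t)"
  define q where "q = (4 * mu + 6) / (mu + 1)"
  have e1_pos: "e1 > 0" unfolding e1_def by simp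
  have e1_le_e2: "e1 \<le> e2"
    unfolding e1_def e2_def using lam t by (simp add: algebra_simps mult_nonneg_nonneg)
  have e2_le_1: "e2 \<le> 1"
    unfolding e2_def using mu lam t by (simp add: mult_nonneg_nonneg)
  have "4 * (1 - e1) \<le> q * (1 - e1)"
    unfolding q_def using mu e1_le_e2 e2_le_1 by (intro mult_right_mono) (simp_all add: field_simps)
  moreover have "-4 * (e2 - e1) \<le> 2 * w0 * (e2 - e1)"
    using w0 e1_le_e2 by (intro mult_right_mono) simp_all
  moreover have "e1 * z0 > 0" using e1_pos z0 by simp
  \<comment> \<open>together: the sum is at least e1 z0 + 4 (1 - e2)\<close>
  ultimately have "e1 * z0 + q * (1 - e1) + 2 * w0 * (e2 - e1) > 0"
    using e2_le_1 by (smt (verit))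
  then show ?thesis
    unfolding crack_z_def e1_def[symmetric] e2_def[symmetric] q_def[symmetric] .
qed

lemma crack_flow_0: "snd p \<noteq> 0 \<Longrightarrow> crack_flow mu lam p 0 = p"
  by (simp add: crack_flow_def crack_w_def crack_z_def field_simps prod_eq_iff)

lemma is_solution_crack_flow:
  assumes mu: "mu \<ge> 0" and lam: "lam \<ge> 0" and p: "0 < snd p" "0 \<le> fst p"
  shows "is_solution mu lam (crack_flow mu lam p)"
proof -
  define w0 where "w0 = fst p / snd p - 2"
  define z0 where "z0 = 1 / snd p"
  have "w0 \<ge> -2" "z0 > 0" unfolding w0_def z0_def using p by simp_all
  moreover have "crack_flow mu lam p =
      (\<lambda>s. ((2 + crack_w mu lam w0 s) / crack_z mu lam w0 z0 s, 1 / crack_z mu lam w0 z0 s))"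
    by (simp add: crack_flow_def w0_def z0_def Let_def fun_eq_iff)
  ultimately show ?thesis
    unfolding is_solution_def using mu lam crack_z_pos[OF mu lam]
    by (auto intro!: linear_coords_crack_field_deriv crack_w_deriv crack_z_deriv
        simp del: minus_mult_left dest: less_imp_neq[symmetric])
qed

lemma crack_w_tendsto:
  assumes "mu > 0" "lam > 0"
  shows "(crack_w mu lam w0 \<longlongrightarrow> 0) at_top"
  using tendsto_mult_right_zero[OF tendsto_exp_neg_mult_at_top[of "lam * mu"], of w0] assms
  by (simp add: crack_w_def[abs_def] mult.commute)

lemma crack_z_tendsto:
  assumes "mu > 0" "lam > 0"
  shows "(crack_z mu lam w0 z0 \<longlongrightarrow> (4 * mu + 6) / (mu + 1)) at_top"
proof -
  define q where "q = (4 * mu + 6) / (mu + 1)"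
  have e1: "((\<lambda>t. exp (- (lam * (mu + 1)) * t)) \<longlongrightarrow> 0) at_top"
    and e2: "((\<lambda>t. exp (- (lam * mu) * t)) \<longlongrightarrow> 0) at_top"
    using tendsto_exp_neg_mult_at_top[of "lam * (mu + 1)"] tendsto_exp_neg_mult_at_top[of "lam * mu"]
      assms by simp_all
  have "((\<lambda>t. exp (- (lam * (mu + 1)) * t) * z0 + q * (1 - exp (- (lam * (mu + 1)) * t))
          + 2 * w0 * (exp (- (lam * mu) * t) - exp (- (lam * (mu + 1)) * t)))
        \<longlongrightarrow> 0 * z0 + q * (1 - 0) + 2 * w0 * (0 - 0)) at_top"
    by (intro tendsto_intros e1 e2)
  then show ?thesis
    by (simp add: crack_z_def[abs_def] q_def)
qed

lemma crack_flow_tendsto: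
  assumes mu: "mu > 0" and lam: "lam > 0"
  shows "(crack_flow mu lam p \<longlongrightarrow> crack_equilibrium mu) at_top"
proof -
  define w0 where "w0 = fst p / snd p - 2"
  define z0 where "z0 = 1 / snd p"
  define q where "q = (4 * mu + 6) / (mu + 1)"
  have "q \<noteq> 0" unfolding q_def using mu by simp
  with crack_w_tendsto[OF mu lam] crack_z_tendsto[OF mu lam, folded q_def]
  have "((\<lambda>t. ((2 + crack_w mu lam w0 t) / crack_z mu lam w0 z0 t, 1 / crack_z mu lam w0 z0 t))
      \<longlongrightarrow> ((2 + 0) / q, 1 / q)) at_top"
    by (intro tendsto_intros)
  moreover have "((2 + 0) / q, 1 / q) = crack_equilibrium mu"
    unfolding q_def crack_equilibrium_def using mu by (simp add: field_simps)
  ultimately show ?thesis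
    by (simp add: crack_flow_def[abs_def] w0_def z0_def Let_def)
qed

lemma is_solution_continuous:
  "is_solution mu lam phi \<Longrightarrow> continuous_on {0..} phi"
  unfolding is_solution_def continuous_on_eq_continuous_within
  by (meson atLeast_iff has_vector_derivative_continuous)

lemma is_solution_fst_deriv:
  "is_solution mu lam phi \<Longrightarrow> t \<ge> 0 \<Longrightarrow>
     ((\<lambda>s. fst (phi s)) has_real_derivative fst (crack_field mu lam (fst (phi t), snd (phi t))))
       (at t within {0..})"
  unfolding is_solution_def by (auto intro: has_vector_derivative_fst)

lemma is_solution_snd_deriv:
  "is_solution mu lam phi \<Longrightarrow> t \<ge> 0 \<Longrightarrow>
     ((\<lambda>s. snd (phi s)) has_real_derivative snd (crack_field mu lam (fst (phi t), snd (phi t))))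
       (at t within {0..})"
  unfolding is_solution_def by (auto intro: has_vector_derivative_snd)

lemma is_solution_snd_pos:
  assumes sol: "is_solution mu lam phi" and pos: "snd (phi 0) > 0" and t: "t \<ge> 0"
  shows "snd (phi t) > 0"
proof -
  define k where "k = (\<lambda>s. lam * (mu + 1 - 2 * fst (phi s) - 2 * snd (phi s) - 4 * mu * snd (phi s)))"
  have "continuous_on {0..} k"
    unfolding k_def using is_solution_continuous[OF sol] by (intro continuous_intros)
  then have "snd (phi t) = snd (phi 0) * exp (integral {0..t} k)"
  proof (rule linear_ode_exp_integral[rotated])
    fix s :: real assume "s \<ge> 0"
    from is_solution_snd_deriv[OF sol this]
    show "((\<lambda>s. snd (phi s)) has_real_derivative k s * snd (phi s)) (at s within {0..})"
      by (rule DERIV_cong) (simp add: k_def crack_field_def case_prod_beta algebra_simps power2_eq_square)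
  qed (fact t)
  then show ?thesis using pos by simp
qed

lemma is_solution_eq_crack_flow:
  assumes mu: "mu \<noteq> -1" and sol: "is_solution mu lam phi" and pos: "snd (phi 0) > 0"
    and t: "t \<ge> 0"
  shows "phi t = crack_flow mu lam (phi 0) t"
proof -
  define x where "x = (\<lambda>s. fst (phi s))"
  define y where "y = (\<lambda>s. snd (phi s))"
  define w0 where "w0 = x 0 / y 0 - 2"
  define z0 where "z0 = 1 / y 0"
  have x': "(x has_real_derivative fst (crack_field mu lam (x s, y s))) (at s within {0..})"
    and y': "(y has_real_derivative snd (crack_field mu lam (x s, y s))) (at s within {0..})"
    and y_nz: "y s \<noteq> 0" if "s \<ge> 0" for s
    using is_solution_fst_deriv[OF sol that] is_solution_snd_deriv[OF sol that]
      is_solution_snd_pos[OF sol pos that]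
    unfolding x_def y_def by auto
  have w_eq: "x s / y s - 2 = crack_w mu lam w0 s" if "s \<ge> 0" for s
  proof (rule linear_ode_unique[where k = "\<lambda>_. - lam * mu" and g = "\<lambda>_. 0", OF _ _ _ _ that])
    show "((\<lambda>s. x s / y s - 2) has_real_derivative - lam * mu * (x s / y s - 2) + 0) (at s within {0..})"
      if "s \<ge> 0" for s
      using crack_field_ratio_deriv[OF x'[OF that] y'[OF that] y_nz[OF that]] by simp
    show "(crack_w mu lam w0 has_real_derivative - lam * mu * crack_w mu lam w0 s + 0) (at s within {0..})"
      for s
      using crack_w_deriv by simp
  qed (simp_all add: crack_w_def w0_def)
  have z_eq: "1 / y s = crack_z mu lam w0 z0 s" if "s \<ge> 0" for s
  proof (rule linear_ode_unique[where k = "\<lambda>_. - lam * (mu + 1)"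
        and g = "\<lambda>s. lam * (4 * mu + 6 + 2 * crack_w mu lam w0 s)", OF _ _ _ _ that])
    show "((\<lambda>s. 1 / y s) has_real_derivative
            - lam * (mu + 1) * (1 / y s) + lam * (4 * mu + 6 + 2 * crack_w mu lam w0 s)) (at s within {0..})"
      if "s \<ge> 0" for s
      using crack_field_reciprocal_deriv[OF x'[OF that] y'[OF that] y_nz[OF that]] w_eq[OF that] by simp
    show "(crack_z mu lam w0 z0 has_real_derivative - lam * (mu + 1) * crack_z mu lam w0 z0 s
            + lam * (4 * mu + 6 + 2 * crack_w mu lam w0 s)) (at s within {0..})" for s
      by (rule crack_z_deriv[OF mu])
  qed (simp_all add: crack_z_def z0_def)
  have "phi t = ((2 + (x t / y t - 2)) / (1 / y t), 1 / (1 / y t))"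
    using y_nz[OF t] by (simp add: x_def y_def)
  then show ?thesis
    unfolding w_eq[OF t] z_eq[OF t] by (simp add: crack_flow_def x_def y_def w0_def z0_def Let_def)
qed

lemma is_solution_tendsto_crack_equilibrium:
  assumes "mu > 0" "lam > 0" "is_solution mu lam phi" "snd (phi 0) > 0"
  shows "(phi \<longlongrightarrow> crack_equilibrium mu) at_top"
proof (rule tendsto_cong[THEN iffD2])
  show "\<forall>\<^sub>F t in at_top. phi t = crack_flow mu lam (phi 0) t"
    using eventually_ge_at_top[of 0] by eventually_elim (use assms is_solution_eq_crack_flow in auto)
qed (rule crack_flow_tendsto[OF assms(1,2)])

theorem proposition1:
  "\<exists>xc :: real \<Rightarrow> real \<times> real.
     (\<forall>mu > 0. \<forall>lam1 > 0.
        xc mu \<in> quadQ \<and> crack_field mu lam1 (xc mu) = (0, 0) \<and>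
        (\<forall>p \<in> quadQ. crack_field mu lam1 p = (0, 0) \<longrightarrow> p = xc mu) \<and>
        snd (xc mu) = fst (xc mu) / 2 \<and>
        (\<forall>p \<in> quadQ. \<exists>phi. is_solution mu lam1 phi \<and> phi 0 = p) \<and>
        (\<forall>phi. is_solution mu lam1 phi \<and> phi 0 \<in> quadQ \<longrightarrow> (phi \<longlongrightarrow> xc mu) at_top)) \<and>
     bij_betw xc {0<..} edge1_interior \<and>
     strict_mono_on {0<..} (\<lambda>mu. fst (xc mu)) \<and>
     strict_mono_on {0<..} (\<lambda>mu. snd (xc mu)) \<and>
     (xc \<longlongrightarrow> (1/3, 1/6)) (at_right 0) \<and>
     (xc \<longlongrightarrow> (1/2, 1/4)) at_top"
proof (rule exI[of _ crack_equilibrium], intro conjI allI impI ballI)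
  fix mu lam :: real assume mu: "mu > 0" and lam: "lam > 0"
  show "crack_equilibrium mu \<in> quadQ"
    using crack_equilibrium_in_edge1_interior[OF mu] edge1_interior_subset_quadQ by blast
  show "snd (crack_equilibrium mu) = fst (crack_equilibrium mu) / 2"
    using crack_equilibrium_in_edge1_interior[OF mu] by (auto simp: edge1_interior_def)
  show "crack_field mu lam (crack_equilibrium mu) = (0, 0)"
    by (rule crack_field_crack_equilibrium[OF mu])
  show "p = crack_equilibrium mu" if "p \<in> quadQ" "crack_field mu lam p = (0, 0)" for p
    using crack_field_eq_zero_in_quadQ[OF mu lam that] .
  show "\<exists>phi. is_solution mu lam phi \<and> phi 0 = p" if "p \<in> quadQ" for p
    using quadQ_pos[OF that] is_solution_crack_flow[of mu lam p] crack_flow_0[of p mu lam] mu lam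
    by auto
  show "(phi \<longlongrightarrow> crack_equilibrium mu) at_top"
    if "is_solution mu lam phi \<and> phi 0 \<in> quadQ" for phi
    using that quadQ_pos is_solution_tendsto_crack_equilibrium[OF mu lam] by blast
qed (simp_all add: bij_betw_crack_equilibrium strict_mono_on_crack_equilibrium
       crack_equilibrium_tendsto_at_right_0 crack_equilibrium_tendsto_at_top)

end
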